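(* Let $X$ be a real Banach space. The following statements are equivalent. (1) $X$ is rotund. (2) $S_X$ is uniquely remotal on $X\setminus\{0\}$. (3) $S_X$ is uniquely remotal on $X\setminus B_X$. (4) $S_X$ is uniquely remotal on $B_X\setminus\{0\}$. (5) $S_X$ is uniquely remotal on $B_X\setminus kB_X$ for any (equivalently, for some) $0<k<1$. (6) $S_X$ is uniquely remotal on $S_X$.
   Context: $B_X$ and $S_X$ denote the closed unit ball and unit sphere of $X$. For a non-empty bounded $F\subseteq X$ and $x\in X$, $r(F,x)=\sup\{\|x-y\|:y\in F\}$ and $Q_F(x)=\{y\in F:\|x-y\|= r(F,x)\}$ (the set of farthest points). $F$ is uniquely remotal on a set $A$ if $Q_F(x)$ is a singleton for every $x\in A$. $X$ is rotund if $\|\frac{x_1+x_2}{2}\|<1$ whenever $x_1,x_2\in S_X$, $x_1\neq x_2$. *)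

theory Defs
  imports "HOL-Analysis.Analysis"
begin

definition farthest_radius :: "'a::real_normed_vector set \<Rightarrow> 'a \<Rightarrow> real" where
  "farthest_radius F x = (SUP y\<in>F. norm (x - y))"

definition farthest_points :: "'a::real_normed_vector set \<Rightarrow> 'a \<Rightarrow> 'a set" where
  "farthest_points F x = {y \<in> F. norm (x - y) = farthest_radius F x}"

definition uniquely_remotal_on :: "'a::real_normed_vector set \<Rightarrow> 'a set \<Rightarrow> bool" where
  "uniquely_remotal_on F A \<longleftrightarrow> (\<forall>x\<in>A. is_singleton (farthest_points F x))"

definition rotund :: "'a::real_normed_vector itself \<Rightarrow> bool" where
  "rotund _ \<longleftrightarrow> (\<forall>x1 \<in> sphere (0::'a) 1. \<forall>x2 \<in> sphere 0 1.
      x1 \<noteq> x2 \<longrightarrow> norm ((1/2) *\<^sub>R (x1 + x2)) < 1)"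

end

(*
  For x \<noteq> 0 the farthest distance from x to the unit sphere is norm x + 1, attained
  exactly at the unit vectors y with norm (x - y) = norm x + norm y. In a rotund space
  equality in the triangle inequality forces sgn x = sgn (- y), so -sgn x is the only
  farthest point. Conversely, if the unit sphere contains a segment [x1, x2], then x1 and
  x2 are both farthest from every positive multiple of -(x1 + x2)/2. Hence unique
  remotality of the sphere on any set that avoids 0 but meets every open ray from 0 is
  equivalent to rotundity, and all six sets of the theorem are of this kind.
*)
theory Submission
  imports Defs
begin

lemma norm_add_sgn:
  fixes x :: "'a::real_normed_vector"
  assumes "x \<noteq> 0"
  shows "norm (x + sgn x) = norm x + 1"
proof -
  have "x + sgn x = (1 + inverse (norm x)) *\<^sub>R x"
    by (simp add: sgn_div_norm algebra_simps)
  then show ?thesis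
    using assms by (simp add: field_simps)
qed

lemma farthest_radius_sphere:
  fixes x :: "'a::real_normed_vector"
  assumes "x \<noteq> 0"
  shows "farthest_radius (sphere 0 1) x = norm x + 1"
  unfolding farthest_radius_def
proof (rule cSup_eq_maximum)
  have "- sgn x \<in> sphere 0 1" "norm (x - - sgn x) = norm x + 1"
    using assms by (simp_all add: norm_sgn norm_add_sgn)
  then show "norm x + 1 \<in> (\<lambda>y. norm (x - y)) ` sphere 0 1"
    by (metis image_eqI)
next
  show "z \<le> norm x + 1" if "z \<in> (\<lambda>y. norm (x - y)) ` sphere 0 1" for z
  proof -
    from that obtain y where "norm y = 1" "z = norm (x - y)" by auto
    then show ?thesis using norm_triangle_ineq4[of x y] by simp
  qed
qed

lemma farthest_points_sphere:
  fixes x :: "'a::real_normed_vector"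
  assumes "x \<noteq> 0"
  shows "farthest_points (sphere 0 1) x = {y \<in> sphere 0 1. norm (x - y) = norm x + 1}"
  using assms by (simp add: farthest_points_def farthest_radius_sphere)

lemma norm_sgn_add_eq_2:
  fixes a b :: "'a::real_normed_vector"
  assumes "a \<noteq> 0" "b \<noteq> 0" "norm (a + b) = norm a + norm b"
  shows "norm (sgn a + sgn b) = 2"
proof -
  have ge: "2 \<le> norm (sgn a + sgn b)"
    if "b \<noteq> 0" and flat: "norm (a + b) = norm a + norm b" and le: "norm b \<le> norm a"
    for a b :: 'a
  proof -
    have pos: "0 < norm b" using that by simp
    then have "0 < norm a" using le by linarith
    let ?c = "inverse (norm b) - inverse (norm a)"
    have c: "0 \<le> ?c" using le pos by (simp add: le_imp_inverse_le)
    have "sgn a + sgn b = inverse (norm b) *\<^sub>R (a + b) - ?c *\<^sub>R a"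
      by (simp add: sgn_div_norm algebra_simps)
    then have "norm (inverse (norm b) *\<^sub>R (a + b)) - norm (?c *\<^sub>R a) \<le> norm (sgn a + sgn b)"
      by (metis norm_triangle_ineq2)
    moreover have "norm (inverse (norm b) *\<^sub>R (a + b)) = (norm a + norm b) / norm b"
      using flat by (simp add: divide_inverse)
    moreover have "norm (?c *\<^sub>R a) = ?c * norm a"
      using c by simp
    moreover have "(norm a + norm b) / norm b - ?c * norm a = 2"
      using pos \<open>0 < norm a\<close> by (simp add: field_simps)
    ultimately show ?thesis by linarith
  qed
  have "2 \<le> norm (sgn a + sgn b)"
  proof (cases "norm b \<le> norm a")
    case True
    with assms ge show ?thesis by blast
  next
    case False
    with assms ge[of a b] show ?thesis by (metis add.commute le_cases)
  qed
  moreover have "norm (sgn a + sgn b) \<le> 2"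
    using assms norm_triangle_ineq[of "sgn a" "sgn b"] by (simp add: norm_sgn)
  ultimately show ?thesis by linarith
qed

lemma rotund_sgn_eq_of_norm_add_eq:
  fixes a b :: "'a::real_normed_vector"
  assumes "rotund TYPE('a)" "a \<noteq> 0" "b \<noteq> 0" "norm (a + b) = norm a + norm b"
  shows "sgn a = sgn b"
proof (rule ccontr)
  assume "sgn a \<noteq> sgn b"
  with assms(1-3) have "norm ((1/2) *\<^sub>R (sgn a + sgn b)) < 1"
    by (simp add: rotund_def norm_sgn del: norm_scaleR)
  with norm_sgn_add_eq_2[OF assms(2-4)] show False by simp
qed

lemma rotund_farthest_points_sphere:
  fixes x :: "'a::real_normed_vector"
  assumes "rotund TYPE('a)" "x \<noteq> 0"
  shows "farthest_points (sphere 0 1) x = {- sgn x}"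
proof -
  have "y = - sgn x" if "norm y = 1" "norm (x - y) = norm x + 1" for y
  proof -
    have "norm (x + - y) = norm x + norm (- y)" using that by simp
    then have "sgn x = sgn (- y)"
      using assms that by (intro rotund_sgn_eq_of_norm_add_eq) auto
    with \<open>norm y = 1\<close> show ?thesis by (simp add: sgn_minus sgn_div_norm)
  qed
  moreover have "norm (x - - sgn x) = norm x + 1" "norm (sgn x) = 1"
    using assms by (simp_all add: norm_add_sgn norm_sgn)
  ultimately show ?thesis
    using assms(2) by (auto simp: farthest_points_sphere)
qed

lemma norm_nonneg_combination_of_flat_pair:
  fixes u v :: "'a::real_normed_vector"
  assumes "norm u = 1" "norm v = 1" "norm (u + v) = 2" "0 \<le> \<alpha>" "0 \<le> \<beta>"
  shows "norm (\<alpha> *\<^sub>R u + \<beta> *\<^sub>R v) = \<alpha> + \<beta>"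
proof -
  have ge: "\<alpha> + \<beta> \<le> norm (\<alpha> *\<^sub>R u + \<beta> *\<^sub>R v)"
    if "norm u = 1" "norm v = 1" "norm (u + v) = 2" "\<beta> \<le> \<alpha>" "0 \<le> \<beta>"
    for u v :: 'a and \<alpha> \<beta> :: real
  proof -
    have "\<alpha> *\<^sub>R u + \<beta> *\<^sub>R v = \<alpha> *\<^sub>R (u + v) - (\<alpha> - \<beta>) *\<^sub>R v"
      by (simp add: algebra_simps)
    then have "norm (\<alpha> *\<^sub>R (u + v)) - norm ((\<alpha> - \<beta>) *\<^sub>R v) \<le> norm (\<alpha> *\<^sub>R u + \<beta> *\<^sub>R v)"
      by (metis norm_triangle_ineq2)
    then show ?thesis using that by simp
  qed
  have "\<alpha> + \<beta> \<le> norm (\<alpha> *\<^sub>R u + \<beta> *\<^sub>R v)"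
  proof (cases "\<beta> \<le> \<alpha>")
    case True
    with assms ge show ?thesis by blast
  next
    case False
    with assms ge[of v u \<alpha> \<beta>] show ?thesis by (simp add: add.commute)
  qed
  moreover have "norm (\<alpha> *\<^sub>R u + \<beta> *\<^sub>R v) \<le> \<alpha> + \<beta>"
    using assms norm_triangle_ineq[of "\<alpha> *\<^sub>R u" "\<beta> *\<^sub>R v"] by simp
  ultimately show ?thesis by linarith
qed

lemma not_rotund_farthest_points_sphere:
  assumes "\<not> rotund TYPE('a::real_normed_vector)"
  obtains m :: "'a::real_normed_vector" where "m \<in> sphere 0 1"
    and "\<And>s. s > 0 \<Longrightarrow> \<not> is_singleton (farthest_points (sphere 0 1) (s *\<^sub>R m))"
proof -
  obtain x1 x2 :: 'a where x12: "norm x1 = 1" "norm x2 = 1" "x1 \<noteq> x2"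
    and "1 \<le> norm ((1/2) *\<^sub>R (x1 + x2))"
    using assms unfolding rotund_def by force
  moreover have "norm (x1 + x2) \<le> 2"
    using norm_triangle_ineq[of x1 x2] x12 by simp
  ultimately have flat: "norm (x1 + x2) = 2" by simp
  define m where "m = - ((1/2) *\<^sub>R (x1 + x2))"
  have "norm m = 1" unfolding m_def using flat by simp
  moreover have "\<not> is_singleton (farthest_points (sphere 0 1) (s *\<^sub>R m))" if "s > 0" for s
  proof -
    have "x1 - s *\<^sub>R m = (1 + s/2) *\<^sub>R x1 + (s/2) *\<^sub>R x2"
      "x2 - s *\<^sub>R m = (s/2) *\<^sub>R x1 + (1 + s/2) *\<^sub>R x2"
      unfolding m_def by (simp_all add: algebra_simps)
    then have "norm (s *\<^sub>R m - x1) = norm (s *\<^sub>R m) + 1"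
      "norm (s *\<^sub>R m - x2) = norm (s *\<^sub>R m) + 1"
      using \<open>norm m = 1\<close> \<open>s > 0\<close> x12 flat
        norm_nonneg_combination_of_flat_pair[of x1 x2 "1 + s/2" "s/2"]
        norm_nonneg_combination_of_flat_pair[of x1 x2 "s/2" "1 + s/2"]
      by (simp_all add: norm_minus_commute)
    moreover have "s *\<^sub>R m \<noteq> 0" using \<open>norm m = 1\<close> \<open>s > 0\<close> by auto
    ultimately have "x1 \<in> farthest_points (sphere 0 1) (s *\<^sub>R m)"
      "x2 \<in> farthest_points (sphere 0 1) (s *\<^sub>R m)"
      using x12 by (simp_all add: farthest_points_sphere)
    with \<open>x1 \<noteq> x2\<close> show ?thesis
      by (auto simp: is_singleton_def)
  qed
  ultimately show ?thesis using that by simp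
qed

lemma rotund_iff_uniquely_remotal_on:
  fixes A :: "'a::real_normed_vector set"
  assumes "0 \<notin> A" and rays: "\<forall>u\<in>sphere 0 1. \<exists>s>0. s *\<^sub>R u \<in> A"
  shows "rotund TYPE('a) \<longleftrightarrow> uniquely_remotal_on (sphere 0 1) A"
proof
  assume "rotund TYPE('a)"
  with \<open>0 \<notin> A\<close> show "uniquely_remotal_on (sphere 0 1) A"
    unfolding uniquely_remotal_on_def by (metis rotund_farthest_points_sphere is_singletonI)
next
  assume unique: "uniquely_remotal_on (sphere 0 1) A"
  show "rotund TYPE('a)"
  proof (rule ccontr)
    assume "\<not> rotund TYPE('a)"
    then obtain m :: 'a where "m \<in> sphere 0 1"
      and "\<And>s. s > 0 \<Longrightarrow> \<not> is_singleton (farthest_points (sphere 0 1) (s *\<^sub>R m))"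
      using not_rotund_farthest_points_sphere by blast
    with rays unique show False
      unfolding uniquely_remotal_on_def by blast
  qed
qed

lemma rotund_iff_uniquely_remotal_on_annulus:
  fixes k :: real
  assumes "0 < k" "k < 1"
  shows "rotund TYPE('a::real_normed_vector) \<longleftrightarrow>
    uniquely_remotal_on (sphere (0::'a) 1) (cball 0 1 - (\<lambda>x. k *\<^sub>R x) ` cball 0 1)"
proof (rule rotund_iff_uniquely_remotal_on)
  have "(0::'a) = k *\<^sub>R 0" by simp
  then show "0 \<notin> cball 0 1 - (\<lambda>x. k *\<^sub>R x) ` cball (0::'a) 1"
    by blast
  have "u \<notin> (\<lambda>x. k *\<^sub>R x) ` cball 0 1" if "norm u = 1" for u :: 'a
  proof
    assume "u \<in> (\<lambda>x. k *\<^sub>R x) ` cball 0 1"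
    then obtain z :: 'a where "norm z \<le> 1" "u = k *\<^sub>R z" by auto
    then have "1 = k * norm z" using \<open>norm u = 1\<close> \<open>0 < k\<close> by simp
    also have "\<dots> \<le> k" using \<open>norm z \<le> 1\<close> \<open>0 < k\<close> by (simp add: mult_left_le)
    finally show False using \<open>k < 1\<close> by simp
  qed
  then show "\<forall>u\<in>sphere 0 1. \<exists>s>0. s *\<^sub>R u \<in> cball 0 1 - (\<lambda>x. k *\<^sub>R x) ` cball (0::'a) 1"
    by (metis DiffI mem_cball_0 mem_sphere_0 order_refl scaleR_one zero_less_one)
qed

theorem theorem3p1:
  shows "(rotund TYPE('a::banach) \<longleftrightarrow>
            uniquely_remotal_on (sphere (0::'a) 1) (UNIV - {0}))
       \<and> (rotund TYPE('a) \<longleftrightarrow>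
            uniquely_remotal_on (sphere (0::'a) 1) (UNIV - cball 0 1))
       \<and> (rotund TYPE('a) \<longleftrightarrow>
            uniquely_remotal_on (sphere (0::'a) 1) (cball 0 1 - {0}))
       \<and> (rotund TYPE('a) \<longleftrightarrow>
            (\<forall>k::real. 0 < k \<and> k < 1 \<longrightarrow>
               uniquely_remotal_on (sphere (0::'a) 1) (cball 0 1 - (\<lambda>x. k *\<^sub>R x) ` cball 0 1)))
       \<and> (rotund TYPE('a) \<longleftrightarrow>
            (\<exists>k::real. 0 < k \<and> k < 1 \<and>
               uniquely_remotal_on (sphere (0::'a) 1) (cball 0 1 - (\<lambda>x. k *\<^sub>R x) ` cball 0 1)))
       \<and> (rotund TYPE('a) \<longleftrightarrow>
            uniquely_remotal_on (sphere (0::'a) 1) (sphere 0 1))"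
proof -
  let ?S = "sphere (0::'a) 1"
  have via_sphere: "rotund TYPE('a) \<longleftrightarrow> uniquely_remotal_on ?S A"
    if "0 \<notin> A" "?S \<subseteq> A" for A
    using that by (intro rotund_iff_uniquely_remotal_on) (auto intro!: exI[of _ 1])
  have "rotund TYPE('a) \<longleftrightarrow> uniquely_remotal_on ?S (UNIV - {0})"
    "rotund TYPE('a) \<longleftrightarrow> uniquely_remotal_on ?S (cball 0 1 - {0})"
    "rotund TYPE('a) \<longleftrightarrow> uniquely_remotal_on ?S ?S"
    by (auto intro!: via_sphere)
  moreover have "rotund TYPE('a) \<longleftrightarrow> uniquely_remotal_on ?S (UNIV - cball 0 1)"
    by (rule rotund_iff_uniquely_remotal_on) (auto intro!: exI[of _ 2])
  moreover note rotund_iff_uniquely_remotal_on_annulus[where 'a='a]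
  ultimately show ?thesis
    by (auto intro!: exI[of _ "1/2"] dest: spec[of _ "1/2"])
qed

end
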